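(* Let $S=S(\lambda_1,\ldots,\lambda_d)$ be a spider whose number of vertices $n=1+\lambda_1+\cdots+\lambda_d$ is even, and let $j$ be the number of legs of odd length (necessarily $j$ is odd). Then $$[e_{(2^{n/2})}]X_S=(-1)^{\frac{j-1}{2}}\cdot 2.$$
   Context: A spider $S(\lambda_1,\ldots,\lambda_d)$, for positive integers $\lambda_1,\ldots,\lambda_d$, is the tree consisting of a vertex $v$ (the center) together with $d$ vertex-disjoint paths (legs) having $\lambda_1,\ldots,\lambda_d$ vertices respectively, where $v$ is joined by an edge to one endpoint of each leg; the length of the $i$-th leg is $\lambda_i$. $(2^{k})$ is the partition with $k$ parts equal to $2$. The chromatic symmetric function of $G$ is $X_G=\sum_\kappa \prod_{v} x_{\kappa(v)}$ over proper colorings $\kappa$, and $[e_\mu]X_G$ denotes the coefficient of $e_\mu$ in the expansion of $X_G$ in elementary symmetric functions. *)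

theory Defs
  imports "HOL-Library.FuncSet"
begin

text \<open>A finite simple graph is given by a vertex set V and a symmetric irreflexive
adjacency relation E. Colours are natural numbers (variables x_0, x_1, ...).\<close>

definition proper_colorings :: "'a set \<Rightarrow> ('a \<Rightarrow> 'a \<Rightarrow> bool) \<Rightarrow> ('a \<Rightarrow> nat) set" where
  "proper_colorings V E =
     {\<kappa> \<in> V \<rightarrow>\<^sub>E (UNIV :: nat set). \<forall>v\<in>V. \<forall>w\<in>V. E v w \<longrightarrow> \<kappa> v \<noteq> \<kappa> w}"

text \<open>Coefficient of the monomial prod_i x_i^(alpha i) in X_G.\<close>
definition X_coeff :: "'a set \<Rightarrow> ('a \<Rightarrow> 'a \<Rightarrow> bool) \<Rightarrow> (nat \<Rightarrow> nat) \<Rightarrow> nat" where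
  "X_coeff V E \<alpha> = card {\<kappa> \<in> proper_colorings V E. \<forall>i. card {v \<in> V. \<kappa> v = i} = \<alpha> i}"

definition partitions :: "nat \<Rightarrow> nat list set" where
  "partitions n = {\<mu>. sorted_wrt (\<ge>) \<mu> \<and> (\<forall>x\<in>set \<mu>. 0 < x) \<and> sum_list \<mu> = n}"

text \<open>Coefficient of the monomial prod_i x_i^(alpha i) in
  e_mu = prod_r e_(mu_r): choose for each part r a set S r of mu_r distinct variables.\<close>
definition e_mono :: "nat list \<Rightarrow> (nat \<Rightarrow> nat) \<Rightarrow> nat" where
  "e_mono \<mu> \<alpha> = card {S :: nat \<Rightarrow> nat set.
      (\<forall>r < length \<mu>. finite (S r) \<and> card (S r) = \<mu> ! r) \<and>
      (\<forall>r. length \<mu> \<le> r \<longrightarrow> S r = {}) \<and>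
      (\<forall>i. card {r. r < length \<mu> \<and> i \<in> S r} = \<alpha> i)}"

text \<open>a is the family of coefficients of the e-expansion X_G = sum_mu a_mu e_mu
  (mu ranging over partitions of n = |V|).\<close>
definition e_expansion :: "'a set \<Rightarrow> ('a \<Rightarrow> 'a \<Rightarrow> bool) \<Rightarrow> (nat list \<Rightarrow> int) \<Rightarrow> bool" where
  "e_expansion V E a \<longleftrightarrow>
     (\<forall>\<mu>. \<mu> \<notin> partitions (card V) \<longrightarrow> a \<mu> = 0) \<and>
     (\<forall>\<alpha>. finite {i. \<alpha> i \<noteq> 0} \<longrightarrow>
        int (X_coeff V E \<alpha>) = (\<Sum>\<mu>\<in>partitions (card V). a \<mu> * int (e_mono \<mu> \<alpha>)))"

definition e_coeff :: "'a set \<Rightarrow> ('a \<Rightarrow> 'a \<Rightarrow> bool) \<Rightarrow> nat list \<Rightarrow> int" where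
  "e_coeff V E \<mu> = (THE a. e_expansion V E a) \<mu>"

text \<open>Spider S(lam_1,...,lam_d): centre (0,0); leg i (i < d) has vertices (i+1,t), 1 \<le> t \<le> lam_i;
  the centre is joined to (i+1,1), and (i+1,t) is joined to (i+1,t+1).\<close>
definition spider_V :: "nat list \<Rightarrow> (nat \<times> nat) set" where
  "spider_V lam = insert (0,0) {(Suc i, t) | i t. i < length lam \<and> 1 \<le> t \<and> t \<le> lam ! i}"

definition spider_adj :: "nat list \<Rightarrow> nat \<times> nat \<Rightarrow> nat \<times> nat \<Rightarrow> bool" where
  "spider_adj lam u v \<longleftrightarrow>
     (u = (0,0) \<and> (\<exists>i < length lam. v = (Suc i, 1))) \<or>
     (fst u = fst v \<and> 1 \<le> fst u \<and> snd v = Suc (snd u))"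

definition spider_E :: "nat list \<Rightarrow> nat \<times> nat \<Rightarrow> nat \<times> nat \<Rightarrow> bool" where
  "spider_E lam u v \<longleftrightarrow> u \<in> spider_V lam \<and> v \<in> spider_V lam \<and>
     (spider_adj lam u v \<or> spider_adj lam v u)"

end

theory Submission
  imports Defs "HOL-Combinatorics.Permutations"
begin

text \<open>The e-expansion of X_G exists and is unique for every finite graph (e_coeff is a definite
  description, so this is needed) by unitriangularity: the coefficient of x^\<mu>' in e_\<nu> is 1 for
  \<nu> = \<mu> and vanishes unless \<mu>' is dominated by \<nu>', and both X_G and every e_\<nu> are symmetric and
  vanish on monomials whose sorted exponent vector is not a partition of n.

  The coefficient of e_(2^k) is then read off by evaluating at x_0 = 1, x_1 = -1, x_i = 0 (i \<ge> 2).
  This sends e_1 and all e_r with r \<ge> 3 to 0 and e_2 to -1, so it kills every e_\<mu> except e_(2^k),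
  which becomes (-1)^k; on X_G it gives the signed count of the proper colourings with colours 0, 1.
  A spider is a tree and has exactly two such colourings, by the parity of the distance from the
  centre. Up to complementation both have a colour class of h = \<Sum> \<lceil>\<lambda>_i/2\<rceil> = (n - 1 + j)/2
  vertices, so [e_(2^k)] X_S = 2 (-1)^(k + h) = 2 (-1)^((j - 1)/2).\<close>

lemma mem_iff_less_card_if_downclosed:
  fixes A :: "nat set"
  assumes "finite A" and "\<And>x y. x \<in> A \<Longrightarrow> y \<le> x \<Longrightarrow> y \<in> A"
  shows "x \<in> A \<longleftrightarrow> x < card A"
proof (cases "A = {}")
  case False
  have "Max A \<in> A" using assms(1) False by simp
  then have A: "A = {..Max A}" using assms by (auto intro: Max_ge)
  then have "card A = Suc (Max A)" by (metis card_atMost)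
  then show ?thesis by (subst A) auto
qed simp

lemma sum_card_filter_swap:
  assumes "finite A" and "finite B"
  shows "(\<Sum>i\<in>A. card {r\<in>B. P r i}) = (\<Sum>r\<in>B. card {i\<in>A. P r i})"
proof -
  have "(\<Sum>i\<in>A. card {r\<in>B. P r i}) = (\<Sum>i\<in>A. \<Sum>r\<in>B. if P r i then 1 else 0)"
    using assms(2) by (simp add: sum.inter_filter[symmetric])
  also have "\<dots> = (\<Sum>r\<in>B. \<Sum>i\<in>A. if P r i then 1 else 0)"
    by (rule sum.swap)
  also have "\<dots> = (\<Sum>r\<in>B. card {i\<in>A. P r i})"
    using assms(1) by (simp add: sum.inter_filter[symmetric])
  finally show ?thesis .
qed

lemma sum_signed_card_fibres:
  assumes "finite S" and "\<And>x. x \<in> S \<Longrightarrow> z x \<le> n"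
  shows "(\<Sum>a\<le>n. (-1::int) ^ (n - a) * int (card {x\<in>S. z x = a})) = (\<Sum>x\<in>S. (-1) ^ (n - z x))"
proof -
  have "(\<Sum>x\<in>S. (-1::int) ^ (n - z x)) = (\<Sum>a\<le>n. \<Sum>x\<in>{x\<in>S. z x = a}. (-1) ^ (n - z x))"
    using assms by (intro sum.group[symmetric]) auto
  also have "\<dots> = (\<Sum>a\<le>n. \<Sum>x\<in>{x\<in>S. z x = a}. (-1) ^ (n - a))"
    by (intro sum.cong refl) auto
  finally show ?thesis by (simp add: mult.commute)
qed

lemma partitions_nth_antimono:
  assumes "\<mu> \<in> partitions n" and "r \<le> r'" and "r' < length \<mu>"
  shows "\<mu> ! r' \<le> \<mu> ! r"
  using assms unfolding partitions_def
  by (cases "r = r'") (auto simp: sorted_wrt_iff_nth_less)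

lemma partitions_nth_pos:
  assumes "\<mu> \<in> partitions n" and "r < length \<mu>"
  shows "0 < \<mu> ! r"
  using assms nth_mem unfolding partitions_def by blast

lemma partitions_sum_nth:
  assumes "\<mu> \<in> partitions n"
  shows "(\<Sum>r<length \<mu>. \<mu> ! r) = n"
  using assms unfolding partitions_def by (simp add: sum_list_sum_nth atLeast0LessThan)

lemma partitions_nth_le:
  assumes "\<mu> \<in> partitions n" and "r < length \<mu>"
  shows "\<mu> ! r \<le> n"
  using elem_le_sum_list[OF assms(2)] assms(1) by (simp add: partitions_def)

lemma partitions_length_le:
  assumes "\<mu> \<in> partitions n"
  shows "length \<mu> \<le> n"
proof -
  have "(\<Sum>r<length \<mu>. 1) \<le> (\<Sum>r<length \<mu>. \<mu> ! r)"
    using partitions_nth_pos[OF assms] by (intro sum_mono) (simp add: Suc_leI)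
  then show ?thesis using partitions_sum_nth[OF assms] by simp
qed

lemma finite_partitions: "finite (partitions n)"
proof (rule finite_subset)
  show "partitions n \<subseteq> {xs. set xs \<subseteq> {..n} \<and> length xs \<le> n}"
  proof
    fix xs assume xs: "xs \<in> partitions n"
    have "set xs \<subseteq> {..n}"
      using xs member_le_sum_list[of _ xs] by (auto simp: partitions_def)
    then show "xs \<in> {xs. set xs \<subseteq> {..n} \<and> length xs \<le> n}"
      using partitions_length_le[OF xs] by simp
  qed
  show "finite {xs. set xs \<subseteq> {..n} \<and> length xs \<le> n}"
    by (rule finite_lists_length_le) simp
qed

lemma replicate_two_in_partitions: "replicate k 2 \<in> partitions (2 * k)"
  by (simp add: partitions_def sorted_wrt_iff_nth_less sum_list_replicate)

lemma partitions_set_subset_two_iff: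
  assumes "\<mu> \<in> partitions (2 * k)"
  shows "set \<mu> \<subseteq> {2} \<longleftrightarrow> \<mu> = replicate k 2"
proof
  assume "set \<mu> \<subseteq> {2}"
  define L where "L = length \<mu>"
  have "\<forall>y\<in>set \<mu>. y = 2" using \<open>set \<mu> \<subseteq> {2}\<close> by blast
  then have \<mu>: "\<mu> = replicate L 2" unfolding L_def by (simp add: replicate_length_same)
  have "2 * k = sum_list \<mu>" using assms by (simp add: partitions_def)
  then have "L = k" unfolding \<mu> by (simp add: sum_list_replicate)
  then show "\<mu> = replicate k 2" using \<mu> by simp
qed auto

section \<open>Conjugate partitions as exponent vectors\<close>

text \<open>conjugate \<mu> i is the (i + 1)-st part of the conjugate partition \<mu>', so that x^(conjugate \<mu>)
  is the leading monomial of e_\<mu>.\<close>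
definition conjugate :: "nat list \<Rightarrow> nat \<Rightarrow> nat" where
  "conjugate \<mu> i = card {r. r < length \<mu> \<and> i < \<mu> ! r}"

definition prefix_sum :: "(nat \<Rightarrow> nat) \<Rightarrow> nat \<Rightarrow> nat" where
  "prefix_sum \<beta> t = (\<Sum>i<t. \<beta> i)"

definition partition_vectors :: "nat \<Rightarrow> (nat \<Rightarrow> nat) set" where
  "partition_vectors n = {\<beta>. antimono \<beta> \<and> (\<forall>i\<ge>n. \<beta> i = 0) \<and> prefix_sum \<beta> n = n}"

definition dominance_rank :: "nat \<Rightarrow> (nat \<Rightarrow> nat) \<Rightarrow> nat" where
  "dominance_rank n \<beta> = (\<Sum>t\<le>n. prefix_sum \<beta> t)"

lemma prefix_sum_Suc: "prefix_sum \<beta> (Suc t) = prefix_sum \<beta> t + \<beta> t"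
  unfolding prefix_sum_def by simp

lemma partition_vectorsD:
  assumes "\<beta> \<in> partition_vectors n"
  shows "i \<le> j \<Longrightarrow> \<beta> j \<le> \<beta> i" and "n \<le> i \<Longrightarrow> \<beta> i = 0" and "prefix_sum \<beta> n = n"
  using assms unfolding partition_vectors_def by (auto dest: antimonoD)

lemma partition_vectorsI:
  assumes "antimono \<beta>" and "\<And>t. prefix_sum \<beta> t \<le> n"
    and "\<And>t. M \<le> t \<Longrightarrow> prefix_sum \<beta> t = n"
  shows "\<beta> \<in> partition_vectors n"
proof -
  have "\<beta> n = 0"
  proof (rule ccontr)
    assume "\<beta> n \<noteq> 0"
    then have "1 \<le> \<beta> i" if "i \<le> n" for i
      using antimonoD[OF assms(1) that] by simp
    then have "(\<Sum>i<Suc n. 1) \<le> prefix_sum \<beta> (Suc n)"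
      unfolding prefix_sum_def by (intro sum_mono) auto
    then show False using assms(2)[of "Suc n"] by simp
  qed
  then have zero: "\<beta> i = 0" if "n \<le> i" for i
    using antimonoD[OF assms(1) that] by simp
  have "prefix_sum \<beta> (n + k) = prefix_sum \<beta> n" for k
    by (induction k) (auto simp: prefix_sum_Suc zero)
  then have "prefix_sum \<beta> n = n" using assms(3)[of "n + M"] by simp
  with assms(1) zero show ?thesis unfolding partition_vectors_def by blast
qed

lemma prefix_sum_card_fibres:
  assumes "finite A"
  shows "prefix_sum (\<lambda>i. card {x\<in>A. g x = i}) t = card {x\<in>A. g x < t}"
proof -
  have "prefix_sum (\<lambda>i. card {x\<in>A. g x = i}) t = (\<Sum>i<t. card {x\<in>{x\<in>A. g x < t}. g x = i})"
    unfolding prefix_sum_def by (intro sum.cong arg_cong[where f=card]) auto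
  also have "\<dots> = card {x\<in>A. g x < t}"
    using card_eq_sum sum.group[of "{x\<in>A. g x < t}" "{..<t}" g "\<lambda>_. 1::nat"] assms by auto
  finally show ?thesis .
qed

lemma card_fibres_in_partition_vectors:
  assumes "finite A" and "antimono (\<lambda>i. card {x\<in>A. g x = i})"
  shows "(\<lambda>i. card {x\<in>A. g x = i}) \<in> partition_vectors (card A)"
proof -
  obtain M where "\<forall>x\<in>A. g x < M"
    using assms(1) finite_nat_set_iff_bounded[of "g ` A"] by auto
  then show ?thesis
    using assms by (intro partition_vectorsI[where M=M])
      (auto simp: prefix_sum_card_fibres intro!: card_mono arg_cong[where f=card])
qed

lemma conjugate_less_iff:
  assumes "\<mu> \<in> partitions n" and "r < length \<mu>"
  shows "r < conjugate \<mu> i \<longleftrightarrow> i < \<mu> ! r"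
proof -
  let ?A = "{r. r < length \<mu> \<and> i < \<mu> ! r}"
  have "r \<in> ?A \<longleftrightarrow> r < card ?A"
    by (rule mem_iff_less_card_if_downclosed)
      (use partitions_nth_antimono[OF assms(1)] in fastforce)+
  then show ?thesis using assms(2) unfolding conjugate_def by simp
qed

lemma conjugate_0:
  assumes "\<mu> \<in> partitions n"
  shows "conjugate \<mu> 0 = length \<mu>"
proof -
  have "{r. r < length \<mu> \<and> 0 < \<mu> ! r} = {..<length \<mu>}"
    using partitions_nth_pos[OF assms] by auto
  then show ?thesis unfolding conjugate_def by simp
qed

lemma nth_eq_card_conjugate:
  assumes "\<mu> \<in> partitions n" and "r < length \<mu>"
  shows "\<mu> ! r = card {i. r < conjugate \<mu> i}"
proof -
  have "{i. r < conjugate \<mu> i} = {..<\<mu> ! r}"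
    using conjugate_less_iff[OF assms] by auto
  then show ?thesis by simp
qed

lemma inj_on_conjugate: "inj_on conjugate (partitions n)"
proof (rule inj_onI)
  fix \<mu> \<mu>' assume \<mu>: "\<mu> \<in> partitions n" "\<mu>' \<in> partitions n" "conjugate \<mu> = conjugate \<mu>'"
  then have len: "length \<mu> = length \<mu>'" using conjugate_0 by metis
  show "\<mu> = \<mu>'"
  proof (rule nth_equalityI)
    fix r assume "r < length \<mu>"
    then show "\<mu> ! r = \<mu>' ! r"
      using nth_eq_card_conjugate[OF \<mu>(1)] nth_eq_card_conjugate[OF \<mu>(2)] len \<mu>(3) by simp
  qed (rule len)
qed

lemma prefix_sum_conjugate:
  "prefix_sum (conjugate \<mu>) t = (\<Sum>r<length \<mu>. min (\<mu> ! r) t)"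
proof -
  have "prefix_sum (conjugate \<mu>) t = (\<Sum>i<t. card {r\<in>{..<length \<mu>}. i < \<mu> ! r})"
    unfolding prefix_sum_def conjugate_def by simp
  also have "\<dots> = (\<Sum>r<length \<mu>. card {i\<in>{..<t}. i < \<mu> ! r})"
    by (rule sum_card_filter_swap) auto
  also have "\<dots> = (\<Sum>r<length \<mu>. min (\<mu> ! r) t)"
  proof (rule sum.cong)
    fix r
    have "{i\<in>{..<t}. i < \<mu> ! r} = {..<min (\<mu> ! r) t}" by auto
    then show "card {i\<in>{..<t}. i < \<mu> ! r} = min (\<mu> ! r) t" by simp
  qed simp
  finally show ?thesis .
qed

lemma conjugate_in_partition_vectors:
  assumes "\<mu> \<in> partitions n"
  shows "conjugate \<mu> \<in> partition_vectors n"
proof (rule partition_vectorsI)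
  show "antimono (conjugate \<mu>)"
    unfolding conjugate_def by (intro antimonoI card_mono) auto
  show "prefix_sum (conjugate \<mu>) t \<le> n" for t
    unfolding prefix_sum_conjugate partitions_sum_nth[OF assms, symmetric]
    by (intro sum_mono) simp
  show "prefix_sum (conjugate \<mu>) t = n" if "n \<le> t" for t
    unfolding prefix_sum_conjugate partitions_sum_nth[OF assms, symmetric]
  proof (rule sum.cong)
    fix r assume "r \<in> {..<length \<mu>}"
    then show "min (\<mu> ! r) t = \<mu> ! r" using partitions_nth_le[OF assms, of r] that by simp
  qed simp
qed

lemma dominance_rank_less:
  assumes "\<beta> \<in> partition_vectors n" and "\<gamma> \<in> partition_vectors n"
    and "\<And>t. prefix_sum \<beta> t \<le> prefix_sum \<gamma> t" and "\<beta> \<noteq> \<gamma>"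
  shows "dominance_rank n \<beta> < dominance_rank n \<gamma>"
proof -
  obtain i where i: "\<beta> i \<noteq> \<gamma> i" using assms(4) by auto
  then have "i < n" using partition_vectorsD(2) assms(1,2) not_less by metis
  have "\<exists>t\<in>{..n}. prefix_sum \<beta> t < prefix_sum \<gamma> t"
  proof (rule ccontr)
    assume "\<not> ?thesis"
    then have "prefix_sum \<beta> t = prefix_sum \<gamma> t" if "t \<le> n" for t
      using assms(3)[of t] that by (simp add: not_less le_antisym)
    then show False using i \<open>i < n\<close> prefix_sum_Suc[of \<beta> i] prefix_sum_Suc[of \<gamma> i] by simp
  qed
  then show ?thesis unfolding dominance_rank_def using assms(3) by (intro sum_strict_mono_ex1) auto
qed

definition dual_partition :: "(nat \<Rightarrow> nat) \<Rightarrow> nat list" where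
  "dual_partition \<nu> = map (\<lambda>r. card {i. r < \<nu> i}) [0..<\<nu> 0]"

lemma finite_partition_vector_superlevel:
  assumes "\<nu> \<in> partition_vectors n"
  shows "finite {i. r < \<nu> i}"
proof (rule finite_subset)
  show "{i. r < \<nu> i} \<subseteq> {..<n}"
    using partition_vectorsD(2)[OF assms] by (metis lessThan_iff mem_Collect_eq not_le not_less0 subsetI)
qed simp

lemma less_card_superlevel_iff:
  assumes "\<nu> \<in> partition_vectors n"
  shows "i < card {i. r < \<nu> i} \<longleftrightarrow> r < \<nu> i"
  using mem_iff_less_card_if_downclosed[OF finite_partition_vector_superlevel[OF assms], of r i]
    partition_vectorsD(1)[OF assms] by fastforce

lemma conjugate_dual_partition:
  assumes "\<nu> \<in> partition_vectors n"
  shows "conjugate (dual_partition \<nu>) = \<nu>"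
proof
  fix i
  have "{r. r < length (dual_partition \<nu>) \<and> i < dual_partition \<nu> ! r} = {..<\<nu> i}"
    unfolding dual_partition_def
    using less_card_superlevel_iff[OF assms] partition_vectorsD(1)[OF assms, of 0 i] by auto
  then show "conjugate (dual_partition \<nu>) i = \<nu> i"
    unfolding conjugate_def by simp
qed

lemma dual_partition_in_partitions:
  assumes "\<nu> \<in> partition_vectors n"
  shows "dual_partition \<nu> \<in> partitions n"
proof -
  let ?\<mu> = "dual_partition \<nu>"
  have "sum_list ?\<mu> = (\<Sum>r<\<nu> 0. card {i\<in>{..<n}. r < \<nu> i})"
    unfolding dual_partition_def using partition_vectorsD(2)[OF assms]
    by (auto simp: sum_list_sum_nth atLeast0LessThan not_le[symmetric]
        intro!: sum.cong arg_cong[where f=card])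
  also have "\<dots> = (\<Sum>i<n. card {r\<in>{..<\<nu> 0}. r < \<nu> i})"
    by (rule sum_card_filter_swap[symmetric]) auto
  also have "\<dots> = prefix_sum \<nu> n"
    unfolding prefix_sum_def
  proof (rule sum.cong)
    fix i
    have "{r\<in>{..<\<nu> 0}. r < \<nu> i} = {..<\<nu> i}"
      using partition_vectorsD(1)[OF assms, of 0 i] by auto
    then show "card {r\<in>{..<\<nu> 0}. r < \<nu> i} = \<nu> i" by simp
  qed simp
  finally have "sum_list ?\<mu> = n" using partition_vectorsD(3)[OF assms] by simp
  moreover have "sorted_wrt (\<ge>) ?\<mu>"
    unfolding sorted_wrt_iff_nth_less dual_partition_def
    by (auto intro!: card_mono finite_partition_vector_superlevel[OF assms])
  moreover have "\<forall>x\<in>set ?\<mu>. 0 < x"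
    using less_card_superlevel_iff[OF assms, of 0] unfolding dual_partition_def by auto
  ultimately show ?thesis unfolding partitions_def by simp
qed

lemma partition_vectors_eq_conjugate_image: "partition_vectors n = conjugate ` partitions n"
  using conjugate_in_partition_vectors conjugate_dual_partition dual_partition_in_partitions
  by (metis image_eqI image_subsetI subset_antisym subsetI)

lemma finite_support_conjugate: "\<mu> \<in> partitions n \<Longrightarrow> finite {i. conjugate \<mu> i \<noteq> 0}"
  using partition_vectorsD(2)[OF conjugate_in_partition_vectors]
  by (metis (mono_tags, lifting) finite_nat_set_iff_bounded mem_Collect_eq not_le)

definition e_mono_sets :: "nat list \<Rightarrow> (nat \<Rightarrow> nat) \<Rightarrow> (nat \<Rightarrow> nat set) set" where
  "e_mono_sets \<mu> \<alpha> = {S.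
      (\<forall>r < length \<mu>. finite (S r) \<and> card (S r) = \<mu> ! r) \<and>
      (\<forall>r. length \<mu> \<le> r \<longrightarrow> S r = {}) \<and>
      (\<forall>i. card {r. r < length \<mu> \<and> i \<in> S r} = \<alpha> i)}"

lemma e_mono_eq_card: "e_mono \<mu> \<alpha> = card (e_mono_sets \<mu> \<alpha>)"
  unfolding e_mono_def e_mono_sets_def ..

lemma e_mono_setsI:
  assumes "\<And>r. r < length \<mu> \<Longrightarrow> finite (S r)" and "\<And>r. r < length \<mu> \<Longrightarrow> card (S r) = \<mu> ! r"
    and "\<And>r. length \<mu> \<le> r \<Longrightarrow> S r = {}" and "\<And>i. card {r. r < length \<mu> \<and> i \<in> S r} = \<alpha> i"
  shows "S \<in> e_mono_sets \<mu> \<alpha>"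
  using assms unfolding e_mono_sets_def by blast

lemma e_mono_setsD:
  assumes "S \<in> e_mono_sets \<mu> \<alpha>"
  shows "r < length \<mu> \<Longrightarrow> finite (S r)" and "r < length \<mu> \<Longrightarrow> card (S r) = \<mu> ! r"
    and "length \<mu> \<le> r \<Longrightarrow> S r = {}" and "card {r. r < length \<mu> \<and> i \<in> S r} = \<alpha> i"
  using assms unfolding e_mono_sets_def by blast+

lemma prefix_sum_e_mono_sets:
  assumes "S \<in> e_mono_sets \<mu> \<alpha>"
  shows "prefix_sum \<alpha> t = (\<Sum>r<length \<mu>. card (S r \<inter> {..<t}))"
proof -
  have "prefix_sum \<alpha> t = (\<Sum>i<t. card {r\<in>{..<length \<mu>}. i \<in> S r})"
    using e_mono_setsD(4)[OF assms] unfolding prefix_sum_def by simp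
  also have "\<dots> = (\<Sum>r<length \<mu>. card {i\<in>{..<t}. i \<in> S r})"
    by (rule sum_card_filter_swap) auto
  also have "\<dots> = (\<Sum>r<length \<mu>. card (S r \<inter> {..<t}))"
    by (intro sum.cong arg_cong[where f=card]) auto
  finally show ?thesis .
qed

lemma e_mono_sets_card_inter_lessThan_le:
  assumes "S \<in> e_mono_sets \<mu> \<alpha>" and "r < length \<mu>"
  shows "card (S r \<inter> {..<t}) \<le> min (\<mu> ! r) t"
proof -
  have "card (S r \<inter> {..<t}) \<le> card (S r)"
    using e_mono_setsD(1)[OF assms] by (intro card_mono) auto
  moreover have "card (S r \<inter> {..<t}) \<le> card {..<t}"
    by (intro card_mono) auto
  ultimately show ?thesis using e_mono_setsD(2)[OF assms] by simp
qed

lemma prefix_sum_le_conjugate_if_e_mono_sets: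
  assumes "S \<in> e_mono_sets \<mu> \<alpha>"
  shows "prefix_sum \<alpha> t \<le> prefix_sum (conjugate \<mu>) t"
  unfolding prefix_sum_e_mono_sets[OF assms] prefix_sum_conjugate
  using e_mono_sets_card_inter_lessThan_le[OF assms] by (intro sum_mono) simp

lemma e_mono_sets_conjugate:
  assumes "\<mu> \<in> partitions n"
  shows "e_mono_sets \<mu> (conjugate \<mu>) = {\<lambda>r. if r < length \<mu> then {..<\<mu> ! r} else {}}"
proof (intro equalityI subsetI)
  fix S assume S: "S \<in> e_mono_sets \<mu> (conjugate \<mu>)"
  have "S r = {..<\<mu> ! r}" if r: "r < length \<mu>" for r
  proof -
    \<comment> \<open>equality of the prefix sums forces equality in every summand\<close>
    have "(\<Sum>r<length \<mu>. card (S r \<inter> {..<t})) = (\<Sum>r<length \<mu>. min (\<mu> ! r) t)" for t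
      using prefix_sum_e_mono_sets[OF S, of t] prefix_sum_conjugate[of \<mu> t] by simp
    then have "card (S r \<inter> {..<\<mu> ! r}) = min (\<mu> ! r) (\<mu> ! r)"
      by (rule sum_mono_inv) (use e_mono_sets_card_inter_lessThan_le[OF S] r in auto)
    then have "card (S r \<inter> {..<\<mu> ! r}) = card (S r)"
      using e_mono_setsD(2)[OF S r] by simp
    then have "S r \<subseteq> {..<\<mu> ! r}"
      using e_mono_setsD(1)[OF S r] card_subset_eq[of "S r" "S r \<inter> {..<\<mu> ! r}"] by blast
    then show ?thesis
      using e_mono_setsD(1,2)[OF S r] by (intro card_subset_eq) auto
  qed
  with e_mono_setsD(3)[OF S] show "S \<in> {\<lambda>r. if r < length \<mu> then {..<\<mu> ! r} else {}}"
    by (auto simp: fun_eq_iff)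
next
  fix S assume "S \<in> {\<lambda>r. if r < length \<mu> then {..<\<mu> ! r} else {}}"
  then show "S \<in> e_mono_sets \<mu> (conjugate \<mu>)"
    unfolding e_mono_sets_def conjugate_def by (auto intro!: arg_cong[where f=card])
qed

lemma e_mono_conjugate: "\<mu> \<in> partitions n \<Longrightarrow> e_mono \<mu> (conjugate \<mu>) = 1"
  by (simp add: e_mono_eq_card e_mono_sets_conjugate)

lemma e_mono_conjugate_triangular:
  assumes "\<mu> \<in> partitions n" and "\<nu> \<in> partitions n" and "e_mono \<nu> (conjugate \<mu>) \<noteq> 0"
  shows "\<nu> = \<mu> \<or> dominance_rank n (conjugate \<mu>) < dominance_rank n (conjugate \<nu>)"
proof (cases "conjugate \<mu> = conjugate \<nu>")
  case True
  then show ?thesis using inj_on_conjugate assms(1,2) by (auto dest: inj_onD)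
next
  case False
  obtain S where "S \<in> e_mono_sets \<nu> (conjugate \<mu>)"
    using assms(3) unfolding e_mono_eq_card by (metis card.empty ex_in_conv)
  then show ?thesis
    using dominance_rank_less[OF conjugate_in_partition_vectors[OF assms(1)]
        conjugate_in_partition_vectors[OF assms(2)] prefix_sum_le_conjugate_if_e_mono_sets False]
    by simp
qed

lemma e_mono_eq_0_if_not_partition_vector:
  assumes "\<mu> \<in> partitions n" and "antimono \<beta>" and "\<beta> \<notin> partition_vectors n"
  shows "e_mono \<mu> \<beta> = 0"
proof (rule ccontr)
  assume "e_mono \<mu> \<beta> \<noteq> 0"
  then obtain S where S: "S \<in> e_mono_sets \<mu> \<beta>"
    unfolding e_mono_eq_card by (metis card.empty ex_in_conv)
  define A where "A = (SIGMA r:{..<length \<mu>}. S r)"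
  have "finite A"
    unfolding A_def using e_mono_setsD(1)[OF S] by auto
  have "card A = n"
    unfolding A_def using e_mono_setsD(1,2)[OF S] partitions_sum_nth[OF assms(1)]
    by (simp add: card_SigmaI)
  have "{x\<in>A. snd x = i} = (\<lambda>r. (r, i)) ` {r. r < length \<mu> \<and> i \<in> S r}" for i
    unfolding A_def by force
  then have "\<beta> = (\<lambda>i. card {x\<in>A. snd x = i})"
    using e_mono_setsD(4)[OF S] by (simp add: card_image inj_on_def fun_eq_iff)
  then show False
    using card_fibres_in_partition_vectors[OF \<open>finite A\<close>, of snd] \<open>card A = n\<close> assms(2,3) by simp
qed

lemma vimage_in_e_mono_sets:
  assumes "bij \<sigma>" and "S \<in> e_mono_sets \<mu> \<alpha>"
  shows "(\<lambda>r. \<sigma> -` S r) \<in> e_mono_sets \<mu> (\<alpha> \<circ> \<sigma>)"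
proof (rule e_mono_setsI)
  have vimage: "\<sigma> -` X = inv \<sigma> ` X" for X
    using bij_vimage_eq_inv_image[OF assms(1)] .
  have inj: "inj_on (inv \<sigma>) X" for X
    using bij_imp_bij_inv[OF assms(1)] bij_is_inj inj_on_subset by blast
  fix r assume r: "r < length \<mu>"
  show "finite (\<sigma> -` S r)"
    unfolding vimage using e_mono_setsD(1)[OF assms(2) r] by simp
  show "card (\<sigma> -` S r) = \<mu> ! r"
    unfolding vimage card_image[OF inj] using e_mono_setsD(2)[OF assms(2) r] .
next
  show "\<sigma> -` S r = {}" if "length \<mu> \<le> r" for r
    using e_mono_setsD(3)[OF assms(2) that] by simp
  show "card {r. r < length \<mu> \<and> i \<in> \<sigma> -` S r} = (\<alpha> \<circ> \<sigma>) i" for i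
    using e_mono_setsD(4)[OF assms(2), of "\<sigma> i"] by simp
qed

lemma e_mono_comp_bij:
  assumes "bij \<sigma>"
  shows "e_mono \<mu> (\<alpha> \<circ> \<sigma>) = e_mono \<mu> \<alpha>"
proof -
  have inv: "bij (inv \<sigma>)" "\<alpha> \<circ> \<sigma> \<circ> inv \<sigma> = \<alpha>"
    using assms by (auto simp: bij_imp_bij_inv fun_eq_iff bij_is_surj surj_f_inv_f)
  have "bij_betw (\<lambda>S r. \<sigma> -` S r) (e_mono_sets \<mu> \<alpha>) (e_mono_sets \<mu> (\<alpha> \<circ> \<sigma>))"
  proof (rule bij_betw_byWitness[where f'="\<lambda>S r. inv \<sigma> -` S r"])
    show "(\<lambda>S r. \<sigma> -` S r) ` e_mono_sets \<mu> \<alpha> \<subseteq> e_mono_sets \<mu> (\<alpha> \<circ> \<sigma>)"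
      using vimage_in_e_mono_sets[OF assms] by blast
    show "(\<lambda>S r. inv \<sigma> -` S r) ` e_mono_sets \<mu> (\<alpha> \<circ> \<sigma>) \<subseteq> e_mono_sets \<mu> \<alpha>"
      using vimage_in_e_mono_sets[OF inv(1), of _ \<mu> "\<alpha> \<circ> \<sigma>"] inv(2) by auto
  qed (use assms in \<open>auto simp: fun_eq_iff bij_def surj_f_inv_f inv_f_f\<close>)
  then show ?thesis unfolding e_mono_eq_card by (metis bij_betw_same_card)
qed

definition proper_colorings_of_type ::
    "'a set \<Rightarrow> ('a \<Rightarrow> 'a \<Rightarrow> bool) \<Rightarrow> (nat \<Rightarrow> nat) \<Rightarrow> ('a \<Rightarrow> nat) set" where
  "proper_colorings_of_type V E \<alpha> =
     {\<kappa> \<in> proper_colorings V E. \<forall>i. card {v \<in> V. \<kappa> v = i} = \<alpha> i}"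

lemma X_coeff_eq_card: "X_coeff V E \<alpha> = card (proper_colorings_of_type V E \<alpha>)"
  unfolding X_coeff_def proper_colorings_of_type_def ..

lemma X_coeff_eq_0_if_not_partition_vector:
  assumes "finite V" and "antimono \<beta>" and "\<beta> \<notin> partition_vectors (card V)"
  shows "X_coeff V E \<beta> = 0"
proof (rule ccontr)
  assume "X_coeff V E \<beta> \<noteq> 0"
  then obtain \<kappa> where "\<kappa> \<in> proper_colorings_of_type V E \<beta>"
    unfolding X_coeff_eq_card by (metis card.empty ex_in_conv)
  then have "\<beta> = (\<lambda>i. card {v\<in>V. \<kappa> v = i})"
    unfolding proper_colorings_of_type_def by auto
  then show False
    using card_fibres_in_partition_vectors[OF assms(1), of \<kappa>] assms(2,3) by simp
qed

lemma restrict_comp_in_proper_colorings_of_type: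
  assumes "bij \<tau>" and "\<kappa> \<in> proper_colorings_of_type V E \<alpha>"
  shows "restrict (\<tau> \<circ> \<kappa>) V \<in> proper_colorings_of_type V E (\<alpha> \<circ> inv \<tau>)"
proof -
  have "{v \<in> V. restrict (\<tau> \<circ> \<kappa>) V v = i} = {v \<in> V. \<kappa> v = inv \<tau> i}" for i
    using assms(1) by (auto simp: bij_def inv_f_f surj_f_inv_f)
  moreover have "inj \<tau>" using assms(1) by (rule bij_is_inj)
  ultimately show ?thesis
    using assms(2) unfolding proper_colorings_of_type_def proper_colorings_def
    by (auto dest: injD)
qed

lemma X_coeff_comp_bij:
  assumes "bij \<sigma>"
  shows "X_coeff V E (\<alpha> \<circ> \<sigma>) = X_coeff V E \<alpha>"
proof -
  have inv: "bij (inv \<sigma>)" "inv (inv \<sigma>) = \<sigma>" "\<alpha> \<circ> \<sigma> \<circ> inv \<sigma> = \<alpha>"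
    using assms by (auto simp: bij_imp_bij_inv inv_inv_eq fun_eq_iff bij_is_surj surj_f_inv_f)
  have undefined_outside: "\<kappa> v = undefined" if "\<kappa> \<in> proper_colorings_of_type V E \<beta>" "v \<notin> V" for \<kappa> \<beta> v
    using that unfolding proper_colorings_of_type_def proper_colorings_def by auto
  have "bij_betw (\<lambda>\<kappa>. restrict (inv \<sigma> \<circ> \<kappa>) V)
      (proper_colorings_of_type V E \<alpha>) (proper_colorings_of_type V E (\<alpha> \<circ> \<sigma>))"
  proof (rule bij_betw_byWitness[where f'="\<lambda>\<kappa>. restrict (\<sigma> \<circ> \<kappa>) V"])
    show "(\<lambda>\<kappa>. restrict (inv \<sigma> \<circ> \<kappa>) V) ` proper_colorings_of_type V E \<alpha>
        \<subseteq> proper_colorings_of_type V E (\<alpha> \<circ> \<sigma>)"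
      using restrict_comp_in_proper_colorings_of_type[OF inv(1), of _ V E \<alpha>] inv(2) by auto
    show "(\<lambda>\<kappa>. restrict (\<sigma> \<circ> \<kappa>) V) ` proper_colorings_of_type V E (\<alpha> \<circ> \<sigma>)
        \<subseteq> proper_colorings_of_type V E \<alpha>"
      using restrict_comp_in_proper_colorings_of_type[OF assms, of _ V E "\<alpha> \<circ> \<sigma>"] inv(3) by auto
  qed (use assms in \<open>auto simp: fun_eq_iff bij_def surj_f_inv_f inv_f_f undefined_outside\<close>)
  then show ?thesis unfolding X_coeff_eq_card by (metis bij_betw_same_card)
qed

section \<open>Existence and uniqueness of the e-expansion\<close>

lemma unitriangular_sum_eq:
  fixes c :: "'a \<Rightarrow> 'a \<Rightarrow> 'b::comm_ring_1" and k :: "'a \<Rightarrow> nat"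
  assumes "finite P" and "\<mu> \<in> P" and "c \<mu> \<mu> = 1"
    and "\<And>\<nu>. \<nu> \<in> P \<Longrightarrow> c \<nu> \<mu> \<noteq> 0 \<Longrightarrow> \<nu> = \<mu> \<or> k \<mu> < k \<nu>"
    and "\<And>\<nu>. \<nu> \<in> P \<Longrightarrow> b \<nu> \<noteq> 0 \<Longrightarrow> k \<nu> \<le> k \<mu>"
  shows "(\<Sum>\<nu>\<in>P. b \<nu> * c \<nu> \<mu>) = b \<mu>"
proof -
  have "(\<Sum>\<nu>\<in>P - {\<mu>}. b \<nu> * c \<nu> \<mu>) = 0"
  proof (intro sum.neutral ballI)
    fix \<nu> assume "\<nu> \<in> P - {\<mu>}"
    then show "b \<nu> * c \<nu> \<mu> = 0"
      using assms(4,5)[of \<nu>] by (cases "b \<nu> = 0"; cases "c \<nu> \<mu> = 0") auto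
  qed
  then show ?thesis using assms(1-3) by (simp add: sum.remove)
qed

lemma unitriangular_system_unique:
  fixes c :: "'a \<Rightarrow> 'a \<Rightarrow> 'b::comm_ring_1" and k :: "'a \<Rightarrow> nat"
  assumes fin: "finite P" and diag: "\<And>\<mu>. \<mu> \<in> P \<Longrightarrow> c \<mu> \<mu> = 1"
    and tri: "\<And>\<mu> \<nu>. \<mu> \<in> P \<Longrightarrow> \<nu> \<in> P \<Longrightarrow> c \<nu> \<mu> \<noteq> 0 \<Longrightarrow> \<nu> = \<mu> \<or> k \<mu> < k \<nu>"
    and hom: "\<And>\<mu>. \<mu> \<in> P \<Longrightarrow> (\<Sum>\<nu>\<in>P. d \<nu> * c \<nu> \<mu>) = 0"
    and "\<mu> \<in> P"
  shows "d \<mu> = 0"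
proof (rule ccontr)
  define Q where "Q = {\<mu>\<in>P. d \<mu> \<noteq> 0}"
  assume "d \<mu> \<noteq> 0"
  then have "k ` Q \<noteq> {}" and "finite (k ` Q)"
    using fin \<open>\<mu> \<in> P\<close> unfolding Q_def by auto
  then have "Max (k ` Q) \<in> k ` Q" by (rule Max_in[rotated])
  then obtain \<mu>\<^sub>0 where \<mu>\<^sub>0: "\<mu>\<^sub>0 \<in> Q" "k \<mu>\<^sub>0 = Max (k ` Q)" by auto
  have "(\<Sum>\<nu>\<in>P. d \<nu> * c \<nu> \<mu>\<^sub>0) = d \<mu>\<^sub>0"
  proof (rule unitriangular_sum_eq[where k=k])
    show P: "\<mu>\<^sub>0 \<in> P" using \<mu>\<^sub>0(1) unfolding Q_def by simp
    show "c \<mu>\<^sub>0 \<mu>\<^sub>0 = 1" using diag[OF P] .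
    show "\<nu> = \<mu>\<^sub>0 \<or> k \<mu>\<^sub>0 < k \<nu>" if "\<nu> \<in> P" "c \<nu> \<mu>\<^sub>0 \<noteq> 0" for \<nu>
      using tri[OF P that] .
    show "k \<nu> \<le> k \<mu>\<^sub>0" if "\<nu> \<in> P" "d \<nu> \<noteq> 0" for \<nu>
      using that \<mu>\<^sub>0(2) \<open>finite (k ` Q)\<close> unfolding Q_def by simp
  qed (rule fin)
  then show False using hom \<mu>\<^sub>0(1) unfolding Q_def by auto
qed

lemma unitriangular_system_solvable:
  fixes c :: "'a \<Rightarrow> 'a \<Rightarrow> 'b::comm_ring_1" and k :: "'a \<Rightarrow> nat"
  assumes fin: "finite P" and diag: "\<And>\<mu>. \<mu> \<in> P \<Longrightarrow> c \<mu> \<mu> = 1"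
    and tri: "\<And>\<mu> \<nu>. \<mu> \<in> P \<Longrightarrow> \<nu> \<in> P \<Longrightarrow> c \<nu> \<mu> \<noteq> 0 \<Longrightarrow> \<nu> = \<mu> \<or> k \<mu> < k \<nu>"
  shows "\<exists>d. \<forall>\<mu>\<in>P. (\<Sum>\<nu>\<in>P. d \<nu> * c \<nu> \<mu>) = g \<mu>"
proof -
  \<comment> \<open>induction on a bound for k on the support of the right-hand side\<close>
  have "\<exists>d. \<forall>\<mu>\<in>P. (\<Sum>\<nu>\<in>P. d \<nu> * c \<nu> \<mu>) = g \<mu>"
    if "\<forall>\<mu>\<in>P. g \<mu> \<noteq> 0 \<longrightarrow> k \<mu> < m" for g m
    using that
  proof (induction m arbitrary: g)
    case 0
    then show ?case by (intro exI[of _ "\<lambda>_. 0"]) auto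
  next
    case (Suc m)
    define b where "b \<nu> = (if k \<nu> = m then g \<nu> else 0)" for \<nu>
    have "(\<Sum>\<nu>\<in>P. b \<nu> * c \<nu> \<mu>) = g \<mu>" if "\<mu> \<in> P" "m \<le> k \<mu>" for \<mu>
    proof -
      have "(\<Sum>\<nu>\<in>P. b \<nu> * c \<nu> \<mu>) = b \<mu>"
        using that fin unfolding b_def
        by (intro unitriangular_sum_eq[where k=k] diag tri) (auto split: if_splits)
      also have "\<dots> = g \<mu>"
        using Suc.prems that unfolding b_def by fastforce
      finally show ?thesis .
    qed
    then have "\<forall>\<mu>\<in>P. g \<mu> - (\<Sum>\<nu>\<in>P. b \<nu> * c \<nu> \<mu>) \<noteq> 0 \<longrightarrow> k \<mu> < m"
      using not_le by fastforce
    then obtain d where "\<forall>\<mu>\<in>P. (\<Sum>\<nu>\<in>P. d \<nu> * c \<nu> \<mu>) = g \<mu> - (\<Sum>\<nu>\<in>P. b \<nu> * c \<nu> \<mu>)"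
      using Suc.IH[of "\<lambda>\<mu>. g \<mu> - (\<Sum>\<nu>\<in>P. b \<nu> * c \<nu> \<mu>)"] by blast
    then have "\<forall>\<mu>\<in>P. (\<Sum>\<nu>\<in>P. (d \<nu> + b \<nu>) * c \<nu> \<mu>) = g \<mu>"
      by (simp add: distrib_right sum.distrib)
    then show ?case by (intro exI[of _ "\<lambda>\<nu>. d \<nu> + b \<nu>"])
  qed
  moreover have "\<forall>\<mu>\<in>P. g \<mu> \<noteq> 0 \<longrightarrow> k \<mu> < Suc (Max (k ` P))"
    using fin by (simp add: le_imp_less_Suc)
  ultimately show ?thesis by blast
qed

lemma ex_bij_antimono_comp:
  fixes \<alpha> :: "nat \<Rightarrow> nat"
  assumes "finite {i. \<alpha> i \<noteq> 0}"
  shows "\<exists>\<sigma> :: nat \<Rightarrow> nat. bij \<sigma> \<and> antimono (\<alpha> \<circ> \<sigma>)"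
proof -
  obtain M where M: "\<And>i. \<alpha> i \<noteq> 0 \<Longrightarrow> i < M"
    using assms unfolding finite_nat_set_iff_bounded by auto
  define ys where "ys = map \<alpha> [0..<M]"
  define xs where "xs = rev (sort ys)"
  have "mset xs = mset ys" unfolding xs_def by simp
  moreover have "length ys = M" unfolding ys_def by simp
  ultimately obtain p where p: "p permutes {..<M}" "permute_list p ys = xs"
    using mset_eq_permutation by metis
  have sorted: "sorted_wrt (\<ge>) xs"
    unfolding xs_def by (simp add: sorted_wrt_rev)
  have "length xs = M"
    using p(2) unfolding ys_def by auto
  have val: "\<alpha> (p i) = (if i < M then xs ! i else 0)" for i
  proof (cases "i < M")
    case True
    then have "p i < M" using permutes_in_image[OF p(1)] by simp
    then show ?thesis
      using True p unfolding ys_def by (auto simp: permute_list_nth)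
  next
    case False
    then show ?thesis using permutes_not_in[OF p(1)] M[of i] by auto
  qed
  have "antimono (\<alpha> \<circ> p)"
  proof (rule antimonoI)
    fix i j :: nat assume "i \<le> j"
    then show "(\<alpha> \<circ> p) j \<le> (\<alpha> \<circ> p) i"
      using sorted \<open>length xs = M\<close> unfolding comp_def val
      by (cases "i = j") (auto simp: sorted_wrt_iff_nth_less)
  qed
  then show ?thesis by (intro exI[of _ p] conjI permutes_bij[OF p(1)])
qed

lemma e_expansion_exists:
  assumes "finite V"
  shows "\<exists>a. e_expansion V E a"
proof -
  define n P where "n = card V" and "P = partitions n"
  define c where "c \<nu> \<mu> = int (e_mono \<nu> (conjugate \<mu>))" for \<nu> \<mu>
  obtain d where d: "\<forall>\<mu>\<in>P. (\<Sum>\<nu>\<in>P. d \<nu> * c \<nu> \<mu>) = int (X_coeff V E (conjugate \<mu>))"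
    using unitriangular_system_solvable[of P c "\<lambda>\<mu>. dominance_rank n (conjugate \<mu>)"]
      finite_partitions e_mono_conjugate e_mono_conjugate_triangular
    unfolding P_def c_def by force
  define a where "a \<mu> = (if \<mu> \<in> P then d \<mu> else 0)" for \<mu>
  \<comment> \<open>d matches the coefficients of the monomials x^\<mu>'; symmetry extends this to all monomials\<close>
  have antimono_case: "int (X_coeff V E \<beta>) = (\<Sum>\<mu>\<in>P. a \<mu> * int (e_mono \<mu> \<beta>))"
    if "antimono \<beta>" for \<beta>
  proof (cases "\<beta> \<in> partition_vectors n")
    case True
    then obtain \<mu> where "\<mu> \<in> P" "\<beta> = conjugate \<mu>"
      using partition_vectors_eq_conjugate_image unfolding P_def by blast
    then show ?thesis using d unfolding a_def c_def by simp
  next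
    case False
    then show ?thesis
      using X_coeff_eq_0_if_not_partition_vector[OF assms that]
        e_mono_eq_0_if_not_partition_vector[OF _ that]
      unfolding n_def P_def by simp
  qed
  have "e_expansion V E a"
    unfolding e_expansion_def
  proof (intro conjI allI impI)
    show "a \<mu> = 0" if "\<mu> \<notin> partitions (card V)" for \<mu>
      using that unfolding a_def P_def n_def by simp
    fix \<alpha> :: "nat \<Rightarrow> nat" assume "finite {i. \<alpha> i \<noteq> 0}"
    then obtain \<sigma> :: "nat \<Rightarrow> nat" where "bij \<sigma>" "antimono (\<alpha> \<circ> \<sigma>)"
      using ex_bij_antimono_comp by blast
    then show "int (X_coeff V E \<alpha>) = (\<Sum>\<mu>\<in>partitions (card V). a \<mu> * int (e_mono \<mu> \<alpha>))"
      using antimono_case[of "\<alpha> \<circ> \<sigma>"] unfolding P_def n_def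
      by (simp add: X_coeff_comp_bij e_mono_comp_bij)
  qed
  then show ?thesis by blast
qed

lemma e_expansion_unique:
  assumes "e_expansion V E a" and "e_expansion V E b"
  shows "a = b"
proof
  fix \<mu>
  define n P where "n = card V" and "P = partitions n"
  have "a \<mu> - b \<mu> = 0" if "\<mu> \<in> P"
  proof (rule unitriangular_system_unique[where k="\<lambda>\<mu>. dominance_rank n (conjugate \<mu>)"
        and c="\<lambda>\<nu> \<mu>. int (e_mono \<nu> (conjugate \<mu>))" and d="\<lambda>\<nu>. a \<nu> - b \<nu>"])
    show "finite P" unfolding P_def by (rule finite_partitions)
    show "int (e_mono \<nu> (conjugate \<nu>)) = 1" if "\<nu> \<in> P" for \<nu>
      using e_mono_conjugate that unfolding P_def by simp
    show "\<nu> = \<mu> \<or> dominance_rank n (conjugate \<mu>) < dominance_rank n (conjugate \<nu>)"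
      if "\<mu> \<in> P" "\<nu> \<in> P" "int (e_mono \<nu> (conjugate \<mu>)) \<noteq> 0" for \<mu> \<nu>
      using e_mono_conjugate_triangular that unfolding P_def by simp
    show "(\<Sum>\<nu>\<in>P. (a \<nu> - b \<nu>) * int (e_mono \<nu> (conjugate \<mu>))) = 0" if "\<mu> \<in> P" for \<mu>
      using assms finite_support_conjugate[of \<mu> n] that
      unfolding e_expansion_def P_def n_def by (simp add: left_diff_distrib sum_subtractf)
  qed (rule that)
  moreover have "a \<mu> = b \<mu>" if "\<mu> \<notin> P"
    using assms that unfolding e_expansion_def P_def n_def by simp
  ultimately show "a \<mu> = b \<mu>" by fastforce
qed

lemma ex1_e_expansion: "finite V \<Longrightarrow> \<exists>!a. e_expansion V E a"
  using e_expansion_exists e_expansion_unique by blast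

section \<open>Evaluation at x_0 = 1, x_1 = -1\<close>

text \<open>Summing the coefficients of the monomials x_0^a x_1^(n-a) with signs (-1)^(n-a) evaluates a
  homogeneous symmetric function of degree n at x_0 = 1, x_1 = -1, x_i = 0 (i \<ge> 2).\<close>
definition two_var_exponent :: "nat \<Rightarrow> nat \<Rightarrow> nat \<Rightarrow> nat" where
  "two_var_exponent n a i = (if i = 0 then a else if i = 1 then n - a else 0)"

text \<open>The terms of e_\<mu> = \<Prod>_r e_(\<mu>_r) in the variables x_0, x_1: factor r contributes the product of
  the \<mu>_r variables in its set.\<close>
definition two_var_choices :: "nat list \<Rightarrow> (nat \<Rightarrow> nat set) set" where
  "two_var_choices \<mu> = (\<Pi>\<^sub>E r\<in>{..<length \<mu>}. {A. A \<subseteq> {0, 1} \<and> card A = \<mu> ! r})"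

lemma finite_two_var_choices: "finite (two_var_choices \<mu>)"
  unfolding two_var_choices_def by (intro finite_PiE) (auto intro: finite_subset)

lemma card_zeros_add_card_ones:
  assumes "\<mu> \<in> partitions n" and "f \<in> two_var_choices \<mu>"
  shows "card {r. r < length \<mu> \<and> 0 \<in> f r} + card {r. r < length \<mu> \<and> 1 \<in> f r} = n"
proof -
  have f: "f r \<subseteq> {0, 1}" "card (f r) = \<mu> ! r" if "r < length \<mu>" for r
    using assms(2) that unfolding two_var_choices_def by auto
  have "n = (\<Sum>r<length \<mu>. card {i\<in>{0::nat, 1}. i \<in> f r})"
    unfolding partitions_sum_nth[OF assms(1), symmetric]
  proof (rule sum.cong)
    fix r assume "r \<in> {..<length \<mu>}"
    then have "{i\<in>{0::nat, 1}. i \<in> f r} = f r" using f(1)[of r] by auto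
    then show "\<mu> ! r = card {i\<in>{0::nat, 1}. i \<in> f r}" using f(2) \<open>r \<in> {..<length \<mu>}\<close> by simp
  qed simp
  also have "\<dots> = (\<Sum>i\<in>{0::nat, 1}. card {r\<in>{..<length \<mu>}. i \<in> f r})"
    by (rule sum_card_filter_swap[symmetric]) auto
  finally show ?thesis by simp
qed

lemma e_mono_two_var_exponent:
  assumes "\<mu> \<in> partitions n"
  shows "e_mono \<mu> (two_var_exponent n a) =
           card {f \<in> two_var_choices \<mu>. card {r. r < length \<mu> \<and> 0 \<in> f r} = a}"
proof -
  let ?L = "length \<mu>"
  have "bij_betw (\<lambda>S. restrict S {..<?L}) (e_mono_sets \<mu> (two_var_exponent n a))
      {f \<in> two_var_choices \<mu>. card {r. r < ?L \<and> 0 \<in> f r} = a}"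
  proof (rule bij_betw_byWitness[where f'="\<lambda>f r. if r < ?L then f r else {}"])
    show "(\<lambda>S. restrict S {..<?L}) ` e_mono_sets \<mu> (two_var_exponent n a)
        \<subseteq> {f \<in> two_var_choices \<mu>. card {r. r < ?L \<and> 0 \<in> f r} = a}"
    proof (rule image_subsetI)
      fix S assume S: "S \<in> e_mono_sets \<mu> (two_var_exponent n a)"
      \<comment> \<open>no factor may use a variable x_i with i \<ge> 2, as its exponent is 0\<close>
      have "S r \<subseteq> {0, 1}" if "r < ?L" for r
      proof
        fix i assume "i \<in> S r"
        then have "r \<in> {r. r < ?L \<and> i \<in> S r}" using that by simp
        then have "card {r. r < ?L \<and> i \<in> S r} \<noteq> 0" by (auto simp: card_eq_0_iff)
        then show "i \<in> {0, 1}"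
          using e_mono_setsD(4)[OF S, of i] unfolding two_var_exponent_def by (auto split: if_splits)
      qed
      then have "restrict S {..<?L} \<in> two_var_choices \<mu>"
        using e_mono_setsD(2)[OF S] unfolding two_var_choices_def by auto
      moreover have "{r. r < ?L \<and> 0 \<in> restrict S {..<?L} r} = {r. r < ?L \<and> 0 \<in> S r}"
        by auto
      ultimately show "restrict S {..<?L} \<in> {f \<in> two_var_choices \<mu>. card {r. r < ?L \<and> 0 \<in> f r} = a}"
        using e_mono_setsD(4)[OF S, of 0] unfolding two_var_exponent_def by simp
    qed
    show "(\<lambda>f r. if r < ?L then f r else {}) ` {f \<in> two_var_choices \<mu>. card {r. r < ?L \<and> 0 \<in> f r} = a}
        \<subseteq> e_mono_sets \<mu> (two_var_exponent n a)"
    proof (rule image_subsetI)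
      fix f assume "f \<in> {f \<in> two_var_choices \<mu>. card {r. r < ?L \<and> 0 \<in> f r} = a}"
      then have f: "f \<in> two_var_choices \<mu>" and a: "card {r. r < ?L \<and> 0 \<in> f r} = a"
        by simp_all
      have f_r: "f r \<subseteq> {0, 1}" "card (f r) = \<mu> ! r" if "r < ?L" for r
        using f that unfolding two_var_choices_def by auto
      then have "finite (f r)" if "r < ?L" for r
        using that finite_subset[of "f r" "{0, 1}"] by simp
      moreover have "card {r. r < ?L \<and> i \<in> f r} = two_var_exponent n a i" for i
        using card_zeros_add_card_ones[OF assms f] a f_r(1)
        unfolding two_var_exponent_def by (auto intro: arg_cong[where f=card])
      moreover have "{r. r < ?L \<and> i \<in> (if r < ?L then f r else {})} = {r. r < ?L \<and> i \<in> f r}" for i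
        by auto
      ultimately show "(\<lambda>r. if r < ?L then f r else {}) \<in> e_mono_sets \<mu> (two_var_exponent n a)"
        using f_r unfolding e_mono_sets_def by auto
    qed
  qed (auto simp: fun_eq_iff two_var_choices_def e_mono_sets_def)
  then show ?thesis unfolding e_mono_eq_card by (rule bij_betw_same_card)
qed

text \<open>The value e_m(1, -1).\<close>
lemma sum_sign_subsets_01:
  "(\<Sum>A | A \<subseteq> {0::nat, 1} \<and> card A = m. if 1 \<in> A then -1 else 1 :: int) =
     (if m = 0 then 1 else if m = 2 then -1 else 0)"
proof -
  have "Pow {0::nat, 1} = {{}, {0}, {1}, {0, 1}}"
    by (simp add: Pow_insert insert_commute)
  then have "{A. A \<subseteq> {0::nat, 1} \<and> card A = m} = {A \<in> {{}, {0}, {1}, {0, 1}}. card A = m}"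
    by blast
  then have "(\<Sum>A | A \<subseteq> {0::nat, 1} \<and> card A = m. if 1 \<in> A then -1 else 1 :: int) =
      (\<Sum>A \<in> {{}, {0::nat}, {1}, {0, 1}}. if card A = m then (if 1 \<in> A then -1 else 1) else 0)"
    by (simp only: sum.inter_filter finite.intros)
  then show ?thesis by simp
qed

lemma sum_sign_two_var_choices:
  assumes "\<mu> \<in> partitions n"
  shows "(\<Sum>f\<in>two_var_choices \<mu>. (-1::int) ^ card {r. r < length \<mu> \<and> 1 \<in> f r}) =
           (if set \<mu> \<subseteq> {2} then (-1) ^ length \<mu> else 0)"
proof -
  let ?L = "length \<mu>"
  have "(\<Sum>f\<in>two_var_choices \<mu>. (-1::int) ^ card {r. r < ?L \<and> 1 \<in> f r}) =
      (\<Sum>f\<in>two_var_choices \<mu>. \<Prod>r<?L. if 1 \<in> f r then -1 else 1)"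
    by (simp add: prod.If_cases Int_def)
  also have "\<dots> = (\<Prod>r<?L. \<Sum>A | A \<subseteq> {0::nat, 1} \<and> card A = \<mu> ! r. if 1 \<in> A then -1 else 1)"
    unfolding two_var_choices_def
    by (subst prod_sum_PiE) (auto intro: finite_subset)
  also have "\<dots> = (\<Prod>r<?L. if \<mu> ! r = 2 then -1 else 0)"
    using partitions_nth_pos[OF assms] sum_sign_subsets_01 by (intro prod.cong) auto
  also have "\<dots> = (if set \<mu> \<subseteq> {2} then (-1) ^ ?L else 0)"
  proof (cases "set \<mu> \<subseteq> {2}")
    case True
    then have "(\<Prod>r<?L. if \<mu> ! r = 2 then -1 else 0) = (\<Prod>r<?L. -1 :: int)"
      using True by (intro prod.cong) (auto simp: set_conv_nth)
    then show ?thesis using True by simp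
  next
    case False
    then obtain r where "r < ?L" "\<mu> ! r \<noteq> 2" by (auto simp: set_conv_nth)
    then have "(\<Prod>r<?L. if \<mu> ! r = 2 then -1 else 0) = (0::int)"
      by (intro prod_zero) auto
    then show ?thesis using False by simp
  qed
  finally show ?thesis .
qed

lemma e_mono_two_var_signed_sum:
  assumes "\<mu> \<in> partitions n"
  shows "(\<Sum>a\<le>n. (-1::int) ^ (n - a) * int (e_mono \<mu> (two_var_exponent n a))) =
           (if set \<mu> \<subseteq> {2} then (-1) ^ length \<mu> else 0)"
proof -
  let ?zeros = "\<lambda>f. card {r. r < length \<mu> \<and> 0 \<in> f r}"
  let ?ones = "\<lambda>f. card {r. r < length \<mu> \<and> 1 \<in> f r}"
  have "?zeros f \<le> card {..<length \<mu>}" for f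
    by (intro card_mono) auto
  then have "?zeros f \<le> n" for f
    using partitions_length_le[OF assms] order.trans by auto
  then have "(\<Sum>a\<le>n. (-1::int) ^ (n - a) * int (e_mono \<mu> (two_var_exponent n a))) =
      (\<Sum>f\<in>two_var_choices \<mu>. (-1) ^ (n - ?zeros f))"
    unfolding e_mono_two_var_exponent[OF assms]
    by (intro sum_signed_card_fibres finite_two_var_choices)
  also have "\<dots> = (\<Sum>f\<in>two_var_choices \<mu>. (-1) ^ ?ones f)"
  proof (rule sum.cong)
    fix f assume "f \<in> two_var_choices \<mu>"
    then have "?zeros f + ?ones f = n" by (rule card_zeros_add_card_ones[OF assms])
    then have "n - ?zeros f = ?ones f" by linarith
    then show "(-1::int) ^ (n - ?zeros f) = (-1) ^ ?ones f" by simp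
  qed simp
  also have "\<dots> = (if set \<mu> \<subseteq> {2} then (-1) ^ length \<mu> else 0)"
    by (rule sum_sign_two_var_choices[OF assms])
  finally show ?thesis .
qed

definition two_colorings :: "'a set \<Rightarrow> ('a \<Rightarrow> 'a \<Rightarrow> bool) \<Rightarrow> ('a \<Rightarrow> nat) set" where
  "two_colorings V E = {\<kappa> \<in> proper_colorings V E. \<forall>v\<in>V. \<kappa> v < 2}"

lemma finite_two_colorings:
  assumes "finite V"
  shows "finite (two_colorings V E)"
proof (rule finite_subset)
  show "two_colorings V E \<subseteq> V \<rightarrow>\<^sub>E {..<2}"
    unfolding two_colorings_def proper_colorings_def by auto
  show "finite (V \<rightarrow>\<^sub>E {..<2::nat})"
    using assms by (intro finite_PiE) auto
qed

lemma card_color_0_add_card_color_1: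
  assumes "finite V" and "\<forall>v\<in>V. \<kappa> v < (2::nat)"
  shows "card {v\<in>V. \<kappa> v = 0} + card {v\<in>V. \<kappa> v = 1} = card V"
proof -
  have "card ({v\<in>V. \<kappa> v = 0} \<union> {v\<in>V. \<kappa> v = 1}) = card {v\<in>V. \<kappa> v = 0} + card {v\<in>V. \<kappa> v = 1}"
    using assms(1) by (intro card_Un_disjoint) auto
  moreover have "{v\<in>V. \<kappa> v = 0} \<union> {v\<in>V. \<kappa> v = 1} = V"
    using assms(2) by auto
  ultimately show ?thesis by simp
qed

lemma proper_colorings_of_type_two_var_exponent:
  assumes "finite V"
  shows "proper_colorings_of_type V E (two_var_exponent (card V) a) =
           {\<kappa> \<in> two_colorings V E. card {v\<in>V. \<kappa> v = 0} = a}"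
proof (intro equalityI subsetI)
  fix \<kappa> assume \<kappa>: "\<kappa> \<in> proper_colorings_of_type V E (two_var_exponent (card V) a)"
  have "\<kappa> v < 2" if "v \<in> V" for v
  proof (rule ccontr)
    assume "\<not> \<kappa> v < 2"
    then have "card {w\<in>V. \<kappa> w = \<kappa> v} = 0"
      using \<kappa> unfolding proper_colorings_of_type_def two_var_exponent_def by auto
    then show False using assms that by auto
  qed
  then show "\<kappa> \<in> {\<kappa> \<in> two_colorings V E. card {v\<in>V. \<kappa> v = 0} = a}"
    using \<kappa> unfolding proper_colorings_of_type_def two_colorings_def two_var_exponent_def
    by (auto dest: spec[of _ 0])
next
  fix \<kappa> assume "\<kappa> \<in> {\<kappa> \<in> two_colorings V E. card {v\<in>V. \<kappa> v = 0} = a}"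
  then have \<kappa>: "\<kappa> \<in> proper_colorings V E" "\<forall>v\<in>V. \<kappa> v < 2" "card {v\<in>V. \<kappa> v = 0} = a"
    unfolding two_colorings_def by auto
  have "card {v\<in>V. \<kappa> v = i} = two_var_exponent (card V) a i" for i
    using card_color_0_add_card_color_1[OF assms \<kappa>(2)] \<kappa>(2,3)
    unfolding two_var_exponent_def by (auto simp: card_eq_0_iff)
  then show "\<kappa> \<in> proper_colorings_of_type V E (two_var_exponent (card V) a)"
    using \<kappa>(1) unfolding proper_colorings_of_type_def by simp
qed

lemma X_coeff_two_var_signed_sum:
  assumes "finite V"
  shows "(\<Sum>a\<le>card V. (-1::int) ^ (card V - a) * int (X_coeff V E (two_var_exponent (card V) a))) =
           (\<Sum>\<kappa>\<in>two_colorings V E. (-1) ^ card {v\<in>V. \<kappa> v = 1})"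
proof -
  let ?zeros = "\<lambda>\<kappa>. card {v\<in>V. \<kappa> v = (0::nat)}"
  have "?zeros \<kappa> \<le> card V" for \<kappa>
    using assms by (intro card_mono) auto
  then have "(\<Sum>a\<le>card V. (-1::int) ^ (card V - a) * int (X_coeff V E (two_var_exponent (card V) a))) =
      (\<Sum>\<kappa>\<in>two_colorings V E. (-1) ^ (card V - ?zeros \<kappa>))"
    unfolding X_coeff_eq_card proper_colorings_of_type_two_var_exponent[OF assms]
    by (intro sum_signed_card_fibres finite_two_colorings assms)
  also have "\<dots> = (\<Sum>\<kappa>\<in>two_colorings V E. (-1) ^ card {v\<in>V. \<kappa> v = 1})"
  proof (rule sum.cong)
    fix \<kappa> assume "\<kappa> \<in> two_colorings V E"
    then have "?zeros \<kappa> + card {v\<in>V. \<kappa> v = 1} = card V"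
      using card_color_0_add_card_color_1[OF assms] unfolding two_colorings_def by blast
    then have "card V - ?zeros \<kappa> = card {v\<in>V. \<kappa> v = 1}" by linarith
    then show "(-1::int) ^ (card V - ?zeros \<kappa>) = (-1) ^ card {v\<in>V. \<kappa> v = 1}" by simp
  qed simp
  finally show ?thesis .
qed

theorem e_coeff_replicate_two:
  assumes "finite V" and "card V = 2 * k"
  shows "e_coeff V E (replicate k 2) = (-1) ^ k * (\<Sum>\<kappa>\<in>two_colorings V E. (-1) ^ card {v\<in>V. \<kappa> v = 1})"
proof -
  define n a where "n = card V" and "a = e_coeff V E"
  have expansion: "e_expansion V E a"
    unfolding a_def e_coeff_def using ex1_e_expansion[OF assms(1)] by (rule theI')
  have "finite {i. two_var_exponent n x i \<noteq> 0}" for x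
    by (rule finite_subset[of _ "{0, 1}"]) (auto simp: two_var_exponent_def)
  then have "(\<Sum>\<kappa>\<in>two_colorings V E. (-1) ^ card {v\<in>V. \<kappa> v = 1}) =
      (\<Sum>x\<le>n. \<Sum>\<mu>\<in>partitions n. a \<mu> * ((-1) ^ (n - x) * int (e_mono \<mu> (two_var_exponent n x))))"
    using expansion unfolding X_coeff_two_var_signed_sum[OF assms(1), symmetric] e_expansion_def n_def
    by (simp add: sum_distrib_left mult.left_commute)
  also have "\<dots> = (\<Sum>\<mu>\<in>partitions n. a \<mu> * (if set \<mu> \<subseteq> {2} then (-1) ^ length \<mu> else 0))"
    by (subst sum.swap) (simp add: sum_distrib_left[symmetric] e_mono_two_var_signed_sum)
  also have "\<dots> = (\<Sum>\<mu>\<in>partitions n. if \<mu> = replicate k 2 then a \<mu> * (-1) ^ k else 0)"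
    using partitions_set_subset_two_iff assms(2) unfolding n_def by (intro sum.cong) auto
  also have "\<dots> = a (replicate k 2) * (-1) ^ k"
    using replicate_two_in_partitions finite_partitions assms(2) unfolding n_def by simp
  finally show ?thesis unfolding a_def by simp
qed

section \<open>Spiders\<close>

lemma spider_V_eq:
  "spider_V lam = insert (0, 0) ((\<lambda>(i, t). (Suc i, t)) ` (SIGMA i:{..<length lam}. {1..lam ! i}))"
  unfolding spider_V_def by auto

lemma finite_spider_V: "finite (spider_V lam)"
  unfolding spider_V_eq by auto

lemma card_image_legs:
  fixes lam :: "nat list"
  assumes "\<And>i. i < length lam \<Longrightarrow> T i \<subseteq> {1..lam ! i}"
  shows "card ((\<lambda>(i, t). (Suc i, t)) ` (SIGMA i:{..<length lam}. T i)) = (\<Sum>i<length lam. card (T i))"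
proof -
  have "inj_on (\<lambda>(i, t). (Suc i, t)) (SIGMA i:{..<length lam}. T i)"
    by (rule inj_onI) auto
  then have "card ((\<lambda>(i, t). (Suc i, t)) ` (SIGMA i:{..<length lam}. T i)) =
      card (SIGMA i:{..<length lam}. T i)"
    by (rule card_image)
  also have "\<dots> = (\<Sum>i<length lam. card (T i))"
  proof (rule card_SigmaI)
    show "\<forall>i\<in>{..<length lam}. finite (T i)"
      using assms finite_subset by blast
  qed simp
  finally show ?thesis .
qed

lemma card_spider_V: "card (spider_V lam) = 1 + sum_list lam"
proof -
  have "(0, 0) \<notin> (\<lambda>(i, t). (Suc i, t)) ` (SIGMA i:{..<length lam}. {1..lam ! i})"
    by auto
  then show ?thesis
    unfolding spider_V_eq using card_image_legs[of lam "\<lambda>i. {1..lam ! i}"]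
    by (simp add: sum_list_sum_nth atLeast0LessThan)
qed

definition parity_coloring :: "nat list \<Rightarrow> nat \<Rightarrow> nat \<times> nat \<Rightarrow> nat" where
  "parity_coloring lam c = restrict (\<lambda>v. (c + snd v) mod 2) (spider_V lam)"

lemma parity_coloring_in_two_colorings:
  "parity_coloring lam c \<in> two_colorings (spider_V lam) (spider_E lam)"
  unfolding two_colorings_def proper_colorings_def mem_Collect_eq
proof (intro conjI ballI impI)
  have flip: "(c + a) mod 2 \<noteq> (c + b) mod 2" if "odd (a + b)" for a b :: nat
    using that by presburger
  fix v w assume "v \<in> spider_V lam" "w \<in> spider_V lam" "spider_E lam v w"
  moreover from this have "odd (snd v + snd w)"
    unfolding spider_E_def spider_adj_def by auto
  ultimately show "parity_coloring lam c v \<noteq> parity_coloring lam c w"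
    using flip unfolding parity_coloring_def by simp
qed (simp_all add: parity_coloring_def)

lemma two_coloring_spider_eq_parity_coloring:
  assumes "\<kappa> \<in> two_colorings (spider_V lam) (spider_E lam)"
  shows "\<kappa> = parity_coloring lam (\<kappa> (0, 0))"
proof -
  let ?V = "spider_V lam"
  have \<kappa>: "\<kappa> \<in> ?V \<rightarrow>\<^sub>E UNIV" "\<And>v. v \<in> ?V \<Longrightarrow> \<kappa> v < 2"
    and proper: "\<And>v w. v \<in> ?V \<Longrightarrow> w \<in> ?V \<Longrightarrow> spider_E lam v w \<Longrightarrow> \<kappa> v \<noteq> \<kappa> w"
    using assms unfolding two_colorings_def proper_colorings_def by auto
  have centre: "(0, 0) \<in> ?V" unfolding spider_V_def by simp
  \<comment> \<open>along an edge the colour flips, so along a leg it alternates\<close>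
  have "b = (a + 1) mod 2" if "a < 2" "b < 2" "a \<noteq> b" for a b :: nat
    using that by presburger
  then have flip: "\<kappa> w = (\<kappa> v + 1) mod 2" if "v \<in> ?V" "w \<in> ?V" "spider_E lam v w" for v w
    using proper[OF that] \<kappa>(2)[OF that(1)] \<kappa>(2)[OF that(2)] by blast
  have leg: "\<kappa> (Suc i, t) = (\<kappa> (0, 0) + t) mod 2" if "i < length lam" "1 \<le> t" "t \<le> lam ! i" for i t
    using that(2,3)
  proof (induction t rule: dec_induct)
    case base
    then have "(Suc i, 1) \<in> ?V" "spider_E lam (0, 0) (Suc i, 1)"
      using that(1) centre unfolding spider_E_def spider_adj_def spider_V_def by auto
    then show ?case using flip centre by simp
  next
    case (step t)
    then have "(Suc i, t) \<in> ?V" "(Suc i, Suc t) \<in> ?V" "spider_E lam (Suc i, t) (Suc i, Suc t)"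
      using that(1) unfolding spider_E_def spider_adj_def spider_V_def by auto
    then show ?case using flip step.IH step.prems by (simp add: mod_Suc_eq)
  qed
  show ?thesis
  proof
    fix v show "\<kappa> v = parity_coloring lam (\<kappa> (0, 0)) v"
    proof (cases "v \<in> ?V")
      case True
      then consider "v = (0, 0)" | i t where "v = (Suc i, t)" "i < length lam" "1 \<le> t" "t \<le> lam ! i"
        unfolding spider_V_def by blast
      then show ?thesis
      proof cases
        case 1
        then show ?thesis using \<kappa>(2)[OF centre] centre unfolding parity_coloring_def by simp
      next
        case 2
        then show ?thesis using leg[OF 2(2-4)] True unfolding parity_coloring_def by simp
      qed
    next
      case False
      then show ?thesis using PiE_arb[OF \<kappa>(1) False] unfolding parity_coloring_def by simp
    qed
  qed
qed

lemma two_colorings_spider: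
  "two_colorings (spider_V lam) (spider_E lam) = {parity_coloring lam 0, parity_coloring lam 1}"
proof (intro equalityI subsetI)
  fix \<kappa> assume \<kappa>: "\<kappa> \<in> two_colorings (spider_V lam) (spider_E lam)"
  have "\<kappa> (0, 0) < 2"
    using \<kappa> unfolding two_colorings_def spider_V_def by auto
  then have "\<kappa> (0, 0) \<in> {0, 1}" by auto
  then show "\<kappa> \<in> {parity_coloring lam 0, parity_coloring lam 1}"
    using two_coloring_spider_eq_parity_coloring[OF \<kappa>] by auto
qed (auto simp: parity_coloring_in_two_colorings)

lemma parity_coloring_0_neq_1: "parity_coloring lam 0 \<noteq> parity_coloring lam 1"
proof
  assume "parity_coloring lam 0 = parity_coloring lam 1"
  then have "parity_coloring lam 0 (0, 0) = parity_coloring lam 1 (0, 0)" by simp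
  then show False unfolding parity_coloring_def spider_V_def by simp
qed

lemma card_odd_atLeastAtMost: "card {t \<in> {1..m}. odd t} = (m + 1) div 2"
proof (induction m)
  case (Suc m)
  show ?case
  proof (cases "odd (Suc m)")
    case True
    then have "{t \<in> {1..Suc m}. odd t} = insert (Suc m) {t \<in> {1..m}. odd t}"
      by (auto simp: le_Suc_eq)
    then show ?thesis using Suc True by (simp; presburger)
  next
    case False
    then have "{t \<in> {1..Suc m}. odd t} = {t \<in> {1..m}. odd t}"
      by (auto simp: le_Suc_eq)
    then show ?thesis using Suc False by (simp; presburger)
  qed
qed simp

lemma card_parity_coloring_0_eq_1:
  "card {v \<in> spider_V lam. parity_coloring lam 0 v = 1} = (\<Sum>x\<leftarrow>lam. (x + 1) div 2)"
proof -
  have "card {v \<in> spider_V lam. parity_coloring lam 0 v = 1} =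
      card ((\<lambda>(i, t). (Suc i, t)) ` (SIGMA i:{..<length lam}. {t \<in> {1..lam ! i}. odd t}))"
    unfolding parity_coloring_def spider_V_def
    by (intro arg_cong[where f=card]) (auto simp: odd_iff_mod_2_eq_one)
  also have "\<dots> = (\<Sum>i<length lam. card {t \<in> {1..lam ! i}. odd t})"
    by (rule card_image_legs) auto
  finally show ?thesis
    using card_odd_atLeastAtMost by (simp add: sum_list_sum_nth atLeast0LessThan)
qed

lemma card_parity_coloring_1_eq_1:
  "card {v \<in> spider_V lam. parity_coloring lam 1 v = 1} = card (spider_V lam) - (\<Sum>x\<leftarrow>lam. (x + 1) div 2)"
proof -
  have "{v \<in> spider_V lam. parity_coloring lam 1 v = 1} =
      spider_V lam - {v \<in> spider_V lam. parity_coloring lam 0 v = 1}"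
    unfolding parity_coloring_def by auto presburger+
  then show ?thesis
    using finite_spider_V card_parity_coloring_0_eq_1 by (simp add: card_Diff_subset)
qed

lemma double_sum_list_half_ceiling:
  fixes lam :: "nat list"
  shows "2 * (\<Sum>x\<leftarrow>lam. (x + 1) div 2) = sum_list lam + length (filter odd lam)"
proof (induction lam)
  case (Cons x lam)
  have "2 * ((x + 1) div 2) = x + (if odd x then 1 else 0)" by presburger
  then show ?case using Cons by simp
qed simp

theorem lemma5p2:
  fixes lam :: "nat list"
  assumes "\<forall>x \<in> set lam. 0 < x"
    and "even (1 + sum_list lam)"
  shows "e_coeff (spider_V lam) (spider_E lam) (replicate ((1 + sum_list lam) div 2) 2)
           = (-1) ^ ((length (filter odd lam) - 1) div 2) * 2"
proof -
  define k h m where "k = (1 + sum_list lam) div 2" and "h = (\<Sum>x\<leftarrow>lam. (x + 1) div 2)"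
    and "m = h - k"
  have card: "card (spider_V lam) = 2 * k"
    using assms(2) unfolding card_spider_V k_def by simp
  have "h \<le> card (spider_V lam)"
    using card_parity_coloring_0_eq_1[of lam] finite_spider_V unfolding h_def
    by (metis (no_types, lifting) card_mono mem_Collect_eq subsetI)
  moreover have "2 * h = sum_list lam + length (filter odd lam)"
    unfolding h_def by (rule double_sum_list_half_ceiling)
  moreover have "sum_list lam + 1 = 2 * k"
    using assms(2) unfolding k_def by simp
  ultimately have m: "h = k + m" "m \<le> k" "length (filter odd lam) = 2 * m + 1"
    unfolding card m_def by arith+
  have "e_coeff (spider_V lam) (spider_E lam) (replicate k 2) =
      (-1) ^ k * ((-1) ^ h + (-1) ^ (2 * k - h))"
    using e_coeff_replicate_two[OF finite_spider_V card, where E="spider_E lam"] parity_coloring_0_neq_1[of lam]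
      card_parity_coloring_0_eq_1[of lam] card_parity_coloring_1_eq_1[of lam]
    unfolding two_colorings_spider card h_def[symmetric] by simp
  also have "\<dots> = (-1) ^ m * 2"
    using m(1,2) by (simp add: minus_one_power_iff)
  finally show ?thesis
    unfolding k_def m(3) by simp
qed

end
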